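(* Let $(\pi_r)_{r\in\mathbb{N}}$ be periods with $\pi_r\ge2$ for all $r$, and let $(K_t)_{t\in\mathbb{N}}$ be the multiperiodic process with periods $(\pi_r)$. For $T\in\mathbb{N}$ define the random set of types $\mathcal{N}_T:=\{K_1,\dots,K_T\}\cap\mathbb{N}$, and the deterministic sets $$\mathcal{A}_T:=\{r\in\mathbb{N}:\bar w_r\le T\},\qquad \mathcal{B}_T:=\{r\in\mathbb{N}:P(K_1=r)\ge 1/T\},$$ where $\bar w_r:=v_1$ with $v_r:=\pi_r$ and $v_i:=v_{i+1}\pi_i/(\pi_i-1)+1$ for $i=r-1,\dots,1$. Then $$\operatorname{card}\mathcal{A}_T\le \mathbb{E}\operatorname{card}\mathcal{N}_T\le \operatorname{card}\mathcal{B}_T+T\,P(K_1\notin\mathcal{B}_T).$$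
   Context: $\mathbb{N}=\{1,2,3,\dots\}$. Multiperiodic sequence with periods $\pi_r\in\mathbb{N}$ and seeds $\sigma_r\in\{1,\dots,\pi_r\}$: the sequence $(k_t)_{t\in\mathbb{N}}$ with values in $\mathbb{N}\cup\{\infty\}$ such that for each $r$, the subsequence obtained from $(k_t)$ by deleting all tokens $k_t<r$, denoted $(k^{(r)}_t)_{t\in\mathbb{N}}$, satisfies $k^{(r)}_t=r\iff t\equiv\sigma_r\pmod{\pi_r}$; entries left undefined for all $r$ are set to $\infty$. Equivalently: clocks $\phi_r$ start at $\sigma_r$; for each token, scan $r=1,2,\dots$, decrementing each clock with $\phi_r>1$, until the first $r$ with $\phi_r=1$, output that $r$ and reset $\phi_r=\pi_r$. The multiperiodic process with periods $(\pi_r)$ is the random multiperiodic sequence with these periods and independent random seeds $\Sigma_r$ uniformly distributed on $\{1,\dots,\pi_r\}$; it is stationary, so $P(K_t=r)$ does not depend on $t$. *)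

theory Defs
  imports "HOL-Probability.Probability" "HOL-Library.Extended_Nat"
begin

text \<open>Periods and seeds are functions on nat; only indices r \<ge> 1 are meaningful
  (the paper's index set is {1,2,3,...}). Tokens take values in enat (\<infinity> allowed).\<close>

definition first_one :: "(nat \<Rightarrow> nat) \<Rightarrow> enat" where
  "first_one \<phi> = (if \<exists>r\<ge>1. \<phi> r = 1 then enat (LEAST r. r \<ge> 1 \<and> \<phi> r = 1) else \<infinity>)"

definition clock_step :: "(nat \<Rightarrow> nat) \<Rightarrow> (nat \<Rightarrow> nat) \<Rightarrow> (nat \<Rightarrow> nat)" where
  "clock_step \<pi> \<phi> = (\<lambda>r. if r \<ge> 1 \<and> enat r < first_one \<phi> then (if \<phi> r > 1 then \<phi> r - 1 else \<phi> r)
                         else if enat r = first_one \<phi> then \<pi> r else \<phi> r)"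

primrec clocks :: "(nat \<Rightarrow> nat) \<Rightarrow> (nat \<Rightarrow> nat) \<Rightarrow> nat \<Rightarrow> (nat \<Rightarrow> nat)" where
  "clocks \<pi> \<sigma> 0 = \<sigma>"
| "clocks \<pi> \<sigma> (Suc n) = clock_step \<pi> (clocks \<pi> \<sigma> n)"

text \<open>The multiperiodic sequence k_t, for t \<ge> 1.\<close>
definition mp_seq :: "(nat \<Rightarrow> nat) \<Rightarrow> (nat \<Rightarrow> nat) \<Rightarrow> nat \<Rightarrow> enat" where
  "mp_seq \<pi> \<sigma> t = first_one (clocks \<pi> \<sigma> (t - 1))"

text \<open>Law of the independent uniform seeds \<Sigma>_r on {1..\<pi>_r} (r \<ge> 1);
  the dummy coordinate 0 is set to the constant 1.\<close>
definition seed_measure :: "(nat \<Rightarrow> nat) \<Rightarrow> (nat \<Rightarrow> nat) measure" where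
  "seed_measure \<pi> = (\<Pi>\<^sub>M r\<in>UNIV. measure_pmf (if r = 0 then return_pmf 1 else pmf_of_set {1..\<pi> r}))"

text \<open>v_i for the auxiliary recursion: wv \<pi> r k = v_{r-k}, with v_r = \<pi>_r and
  v_i = v_{i+1} \<pi>_i/(\<pi>_i - 1) + 1.\<close>
primrec wv :: "(nat \<Rightarrow> nat) \<Rightarrow> nat \<Rightarrow> nat \<Rightarrow> real" where
  "wv \<pi> r 0 = real (\<pi> r)"
| "wv \<pi> r (Suc k) = wv \<pi> r k * real (\<pi> (r - Suc k)) / (real (\<pi> (r - Suc k)) - 1) + 1"

definition wbar :: "(nat \<Rightarrow> nat) \<Rightarrow> nat \<Rightarrow> real" where
  "wbar \<pi> r = wv \<pi> r (r - 1)"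

end

(*
  Let n_i(t) be the number of the first t tokens that are at least i. Between two occurrences
  of type i, clock i is decremented by every token larger than i and then reset from 1 to pi_i;
  this balance gives n_i(t) <= n_(i+1)(t) pi_i / (pi_i - 1) + 1. Starting from n_1(T) = T, the
  recursion defining wbar yields n_r(T) >= pi_r whenever wbar r <= T. If type r did not occur
  among the first T tokens, these tokens would all be larger than r and would decrement clock r
  more than pi_r - 1 times, which is impossible. So for every admissible seed, hence almost
  surely, each type in A_T is seen by time T.

  For the upper bound, a type outside B_T can only be seen at a time t with K_t not in B_T, so
  card N_T <= card B_T + #{t <= T. K_t not in B_T}, and the expectation of the last term is
  T P(K_1 not in B_T) by stationarity. Stationarity holds because the clock step, restricted to
  the first R clocks, permutes the finitely many admissible states of these clocks, whose joint
  law is uniform. Finally B_T is finite because the events K_1 = r are disjoint.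
*)
theory Submission
  imports Defs
begin

section \<open>Cylinder events of products of uniform distributions\<close>




lemma sets_restrict_cylinder:
  fixes p :: "'i \<Rightarrow> 'b::countable pmf"
  assumes "finite J"
  shows "{\<sigma>. Q (restrict \<sigma> J)} \<in> sets (\<Pi>\<^sub>M i\<in>UNIV. measure_pmf (p i))"
proof -
  let ?M = "\<Pi>\<^sub>M i\<in>UNIV. measure_pmf (p i)"
  have "(\<lambda>\<sigma>. restrict \<sigma> J) \<in> ?M \<rightarrow>\<^sub>M (\<Pi>\<^sub>M i\<in>J. count_space UNIV)"
    using measurable_component_singleton[of _ UNIV "\<lambda>i. measure_pmf (p i)"]
    by (intro measurable_restrict) (simp add: measurable_pmf_measure2)
  also have "(\<Pi>\<^sub>M i\<in>J. count_space UNIV) = count_space (\<Pi>\<^sub>E i\<in>J. (UNIV :: 'b set))"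
    using assms by (intro count_space_PiM_finite) simp_all
  finally have "(\<lambda>\<sigma>. Q (restrict \<sigma> J)) \<in> ?M \<rightarrow>\<^sub>M count_space UNIV"
    by (rule measurable_compose[OF _ measurable_count_space])
  from measurable_sets[OF this, of "{True}"] show ?thesis by (simp add: space_PiM vimage_def)
qed

lemma AE_PiM_in_set_pmf:
  fixes p :: "'i::countable \<Rightarrow> 'b pmf"
  shows "AE \<sigma> in (\<Pi>\<^sub>M i\<in>UNIV. measure_pmf (p i)). \<forall>i. \<sigma> i \<in> set_pmf (p i)"
proof -
  interpret product_prob_space "\<lambda>i. measure_pmf (p i)" UNIV
    by (intro product_prob_spaceI prob_space_measure_pmf)
  have "AE \<sigma> in (\<Pi>\<^sub>M i\<in>UNIV. measure_pmf (p i)). \<sigma> i \<in> set_pmf (p i)" for i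
    by (rule AE_component[of i "\<lambda>x. x \<in> set_pmf (p i)"]) (auto intro: AE_pmfI)
  then show ?thesis unfolding AE_all_countable ..
qed

lemma measure_restrict_cylinder_uniform:
  fixes S :: "'i::countable \<Rightarrow> 'b::countable set"
  assumes "finite J" and finite: "\<And>i. finite (S i)" and nonempty: "\<And>i. S i \<noteq> {}"
  shows "measure (\<Pi>\<^sub>M i\<in>UNIV. measure_pmf (pmf_of_set (S i))) {\<sigma>. Q (restrict \<sigma> J)}
    = card {x \<in> Pi\<^sub>E J S. Q x} / card (Pi\<^sub>E J S)"
proof -
  let ?M = "\<Pi>\<^sub>M i\<in>UNIV. measure_pmf (pmf_of_set (S i))"
  interpret product_prob_space "\<lambda>i. measure_pmf (pmf_of_set (S i))" UNIV
    by (intro product_prob_spaceI prob_space_measure_pmf)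
  define C where "C x = {\<sigma> :: 'i \<Rightarrow> 'b. restrict \<sigma> J = x}" for x
  have C_sets: "C x \<in> sets ?M" for x
    unfolding C_def by (rule sets_restrict_cylinder[OF \<open>finite J\<close>])
  have C_measure: "measure ?M (C x) = 1 / card (Pi\<^sub>E J S)" if "x \<in> Pi\<^sub>E J S" for x
  proof -
    have "C x = prod_emb UNIV (\<lambda>i. measure_pmf (pmf_of_set (S i))) J (\<Pi>\<^sub>E i\<in>J. {x i})"
      using that by (auto simp: C_def prod_emb_def space_PiM PiE_iff extensional_def)
    then have "emeasure ?M (C x) = (\<Prod>i\<in>J. emeasure (measure_pmf (pmf_of_set (S i))) {x i})"
      using \<open>finite J\<close> by (simp add: emeasure_PiM_emb)
    also have "\<dots> = ennreal (\<Prod>i\<in>J. 1 / card (S i))"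
      using that finite nonempty
      by (simp add: emeasure_pmf_single PiE_iff prod_ennreal[symmetric] cong: prod.cong)
    finally show ?thesis
      using \<open>finite J\<close> by (simp add: measure_def card_PiE prod_dividef prod_nonneg)
  qed
  have "AE \<sigma> in ?M. \<sigma> \<in> {\<sigma>. Q (restrict \<sigma> J)} \<longleftrightarrow> \<sigma> \<in> (\<Union>x\<in>{x \<in> Pi\<^sub>E J S. Q x}. C x)"
    using AE_PiM_in_set_pmf[of "\<lambda>i. pmf_of_set (S i)"]
    by eventually_elim (auto simp: C_def finite nonempty)
  then have "measure ?M {\<sigma>. Q (restrict \<sigma> J)} = measure ?M (\<Union>x\<in>{x \<in> Pi\<^sub>E J S. Q x}. C x)"
    using C_sets \<open>finite J\<close> finite
    by (intro measure_eq_AE sets_restrict_cylinder sets.finite_UN) (auto simp: finite_PiE)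
  also have "\<dots> = (\<Sum>x\<in>{x \<in> Pi\<^sub>E J S. Q x}. measure ?M (C x))"
    using C_sets \<open>finite J\<close> finite
    by (intro finite_measure_finite_Union) (auto simp: finite_PiE disjoint_family_on_def C_def)
  also have "\<dots> = card {x \<in> Pi\<^sub>E J S. Q x} / card (Pi\<^sub>E J S)"
    by (simp add: C_measure)
  finally show ?thesis .
qed

section \<open>The clock algorithm\<close>

lemma enat_less_iff_forall_neq: "enat i < k \<longleftrightarrow> (\<forall>j\<le>i. k \<noteq> enat j)"
  by (cases k) (auto simp flip: not_le)

lemma first_one_eq_enat_iff:
  "first_one \<phi> = enat r \<longleftrightarrow> r \<ge> 1 \<and> \<phi> r = 1 \<and> (\<forall>j\<in>{1..<r}. \<phi> j \<noteq> 1)"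
proof (cases "\<exists>r\<ge>1. \<phi> r = 1")
  case True
  then have "first_one \<phi> = enat (LEAST r. r \<ge> 1 \<and> \<phi> r = 1)"
    by (simp add: first_one_def)
  then show ?thesis
    using LeastI_ex[OF True] Least_le[of "\<lambda>r. r \<ge> 1 \<and> \<phi> r = 1"]
    by (auto simp: not_le[symmetric]) (metis atLeastLessThan_iff le_antisym not_le)
qed (auto simp: first_one_def)

lemma enat_less_first_one_iff: "enat i < first_one \<phi> \<longleftrightarrow> (\<forall>j\<in>{1..i}. \<phi> j \<noteq> 1)"
proof (cases "\<exists>r\<ge>1. \<phi> r = 1")
  case True
  then have "first_one \<phi> = enat (LEAST r. r \<ge> 1 \<and> \<phi> r = 1)"
    by (simp add: first_one_def)
  then show ?thesis
    using LeastI_ex[OF True] Least_le[of "\<lambda>r. r \<ge> 1 \<and> \<phi> r = 1"]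
    by (auto simp: not_le[symmetric]) (meson le_trans)+
qed (auto simp: first_one_def)

lemma one_le_first_one: "1 \<le> first_one \<phi>"
  using enat_less_first_one_iff[of 0 \<phi>] by (simp add: ileI1 one_eSuc zero_enat_def)

lemma clock_step_zero: "clock_step \<pi> \<phi> 0 = \<phi> 0"
  using one_le_first_one[of \<phi>] by (auto simp: clock_step_def zero_enat_def[symmetric])

lemma clock_step_apply:
  assumes "i \<ge> 1" "\<phi> i \<ge> 1"
  shows "clock_step \<pi> \<phi> i =
    (if enat i < first_one \<phi> then \<phi> i - 1 else if first_one \<phi> = enat i then \<pi> i else \<phi> i)"
  using assms enat_less_first_one_iff[of i \<phi>] by (auto simp: clock_step_def)

lemma clock_step_less_period:
  assumes "enat j < first_one \<phi>" and "j \<ge> 1" and "\<phi> j \<in> {1..\<pi> j}"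
  shows "clock_step \<pi> \<phi> j < \<pi> j"
  using assms by (auto simp: clock_step_apply)

lemma clock_step_cong:
  assumes "\<And>j. j \<le> i \<Longrightarrow> \<phi> j = \<psi> j"
  shows "clock_step \<pi> \<phi> i = clock_step \<pi> \<psi> i"
proof -
  have "enat i = first_one \<phi> \<longleftrightarrow> enat i = first_one \<psi>"
    unfolding eq_commute[of "enat i"] first_one_eq_enat_iff using assms by auto
  moreover have "enat i < first_one \<phi> \<longleftrightarrow> enat i < first_one \<psi>"
    unfolding enat_less_first_one_iff using assms by auto
  moreover have "\<phi> i = \<psi> i" using assms by simp
  ultimately show ?thesis unfolding clock_step_def by (simp only:)
qed

definition seed_range :: "(nat \<Rightarrow> nat) \<Rightarrow> nat \<Rightarrow> nat set" where
  "seed_range \<pi> r = (if r = 0 then {1} else {1..\<pi> r})"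

lemma seed_range_pos [simp]: "i \<ge> 1 \<Longrightarrow> seed_range \<pi> i = {1..\<pi> i}"
  by (simp add: seed_range_def)

lemma clock_step_in_seed_range:
  assumes "\<phi> i \<in> seed_range \<pi> i" and "i \<ge> 1 \<Longrightarrow> \<pi> i \<ge> 1"
  shows "clock_step \<pi> \<phi> i \<in> seed_range \<pi> i"
proof (cases "i = 0")
  case False
  then have "enat i < first_one \<phi> \<Longrightarrow> \<phi> i \<noteq> 1"
    by (simp add: enat_less_first_one_iff)
  with False assms show ?thesis by (auto simp: clock_step_apply)
qed (use assms in \<open>simp add: clock_step_zero\<close>)

lemma clocks_in_seed_range:
  assumes "\<And>i. \<sigma> i \<in> seed_range \<pi> i" and "\<And>r. r \<ge> 1 \<Longrightarrow> \<pi> r \<ge> 1"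
  shows "clocks \<pi> \<sigma> n i \<in> seed_range \<pi> i"
  using assms by (induction n) (auto intro: clock_step_in_seed_range)

section \<open>Types with small wbar occur by time T\<close>

primrec num_tokens_ge :: "(nat \<Rightarrow> nat) \<Rightarrow> (nat \<Rightarrow> nat) \<Rightarrow> nat \<Rightarrow> nat \<Rightarrow> nat" where
  "num_tokens_ge \<pi> \<sigma> i 0 = 0"
| "num_tokens_ge \<pi> \<sigma> i (Suc n) =
     num_tokens_ge \<pi> \<sigma> i n + (if enat i \<le> first_one (clocks \<pi> \<sigma> n) then 1 else 0)"

lemma num_tokens_ge_one: "num_tokens_ge \<pi> \<sigma> 1 n = n"
  using one_le_first_one by (induction n) (auto simp: one_enat_def)

lemma num_tokens_ge_Suc_le: "num_tokens_ge \<pi> \<sigma> (Suc i) n \<le> num_tokens_ge \<pi> \<sigma> i n"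
  by (induction n) (auto simp: Suc_ile_eq)

lemma token_occurs_if_num_tokens_ge_less:
  assumes "num_tokens_ge \<pi> \<sigma> (Suc i) n < num_tokens_ge \<pi> \<sigma> i n"
  shows "\<exists>t\<in>{1..n}. mp_seq \<pi> \<sigma> t = enat i"
  using assms
proof (induction n)
  case (Suc n)
  show ?case
  proof (cases "num_tokens_ge \<pi> \<sigma> (Suc i) n < num_tokens_ge \<pi> \<sigma> i n")
    case True
    then show ?thesis using Suc.IH by auto
  next
    case False
    with Suc.prems num_tokens_ge_Suc_le[of \<pi> \<sigma> i n]
    have "first_one (clocks \<pi> \<sigma> n) = enat i"
      by (auto simp: Suc_ile_eq split: if_splits)
    then show ?thesis by (intro bexI[of _ "Suc n"]) (auto simp: mp_seq_def)
  qed
qed simp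

text \<open>Every token larger than \<open>i\<close> decrements clock \<open>i\<close>, and every token equal to \<open>i\<close>
  lifts it from 1 back to its period.\<close>

lemma clock_balance:
  assumes seeds: "\<And>i. \<sigma> i \<in> seed_range \<pi> i" and periods: "\<And>r. r \<ge> 1 \<Longrightarrow> \<pi> r \<ge> 1"
    and i: "i \<ge> 1"
  shows "real (clocks \<pi> \<sigma> n i) + real (num_tokens_ge \<pi> \<sigma> (Suc i) n) =
    real (\<sigma> i)
    + (real (num_tokens_ge \<pi> \<sigma> i n) - real (num_tokens_ge \<pi> \<sigma> (Suc i) n)) * (real (\<pi> i) - 1)"
proof (induction n)
  case (Suc n)
  let ?\<phi> = "clocks \<pi> \<sigma> n"
  have range: "?\<phi> i \<in> {1..\<pi> i}"
    using clocks_in_seed_range[OF seeds periods, of n i] i by simp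
  consider "first_one ?\<phi> < enat i" | "first_one ?\<phi> = enat i" | "enat i < first_one ?\<phi>"
    using linorder_less_linear by blast
  then show ?case
  proof cases
    case 1
    then have "clock_step \<pi> ?\<phi> i = ?\<phi> i" by (auto simp: clock_step_def)
    moreover have "\<not> enat i \<le> first_one ?\<phi>" "\<not> enat (Suc i) \<le> first_one ?\<phi>"
      using 1 by (simp_all add: Suc_ile_eq not_le)
    ultimately show ?thesis using Suc.IH by simp
  next
    case 2
    then have "?\<phi> i = 1" by (simp add: first_one_eq_enat_iff)
    with 2 i have "clock_step \<pi> ?\<phi> i = \<pi> i" by (simp add: clock_step_apply)
    moreover have "enat i \<le> first_one ?\<phi>" "\<not> enat (Suc i) \<le> first_one ?\<phi>"
      using 2 by (simp_all add: Suc_ile_eq)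
    ultimately show ?thesis using \<open>?\<phi> i = 1\<close> Suc.IH by (simp add: ring_distribs)
  next
    case 3
    then have "?\<phi> i \<noteq> 1" using i by (simp add: enat_less_first_one_iff)
    with 3 range i have "real (clock_step \<pi> ?\<phi> i) = real (?\<phi> i) - 1"
      by (simp add: clock_step_apply of_nat_diff)
    moreover have "enat i \<le> first_one ?\<phi>" "enat (Suc i) \<le> first_one ?\<phi>"
      using 3 by (simp_all add: Suc_ile_eq)
    ultimately show ?thesis using Suc.IH by (simp add: ring_distribs)
  qed
qed simp

lemma num_tokens_ge_le_ratio:
  assumes seeds: "\<And>i. \<sigma> i \<in> seed_range \<pi> i" and periods: "\<And>r. r \<ge> 1 \<Longrightarrow> \<pi> r \<ge> 2"
    and i: "i \<ge> 1"
  shows "real (num_tokens_ge \<pi> \<sigma> i n)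
    \<le> real (num_tokens_ge \<pi> \<sigma> (Suc i) n) * real (\<pi> i) / (real (\<pi> i) - 1) + 1"
proof -
  let ?a = "real (num_tokens_ge \<pi> \<sigma> i n)" and ?b = "real (num_tokens_ge \<pi> \<sigma> (Suc i) n)"
    and ?p = "real (\<pi> i)"
  have periods': "\<And>r. r \<ge> 1 \<Longrightarrow> \<pi> r \<ge> 1"
    using periods by (meson le_trans one_le_numeral)
  have "clocks \<pi> \<sigma> n i \<le> \<pi> i" "\<sigma> i \<ge> 1"
    using clocks_in_seed_range[OF seeds periods', of n i] seeds[of i] i by auto
  with clock_balance[OF seeds periods' i, of n] have "(?a - ?b - 1) * (?p - 1) \<le> ?b"
    by (simp add: algebra_simps)
  moreover have "?p - 1 > 0" using periods[OF i] by simp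
  ultimately show ?thesis by (simp add: field_simps)
qed

lemma wv_le_num_tokens_ge:
  assumes seeds: "\<And>i. \<sigma> i \<in> seed_range \<pi> i" and periods: "\<And>r. r \<ge> 1 \<Longrightarrow> \<pi> r \<ge> 2"
    and "wbar \<pi> r \<le> real n" and "i \<ge> 1" "i \<le> r"
  shows "wv \<pi> r (r - i) \<le> real (num_tokens_ge \<pi> \<sigma> i n)"
  using \<open>i \<ge> 1\<close> \<open>i \<le> r\<close>
proof (induction i rule: nat_induct_at_least)
  case base
  then show ?case
    using \<open>wbar \<pi> r \<le> real n\<close> num_tokens_ge_one[of \<pi> \<sigma> n] by (simp add: wbar_def)
next
  case (Suc i)
  let ?p = "real (\<pi> i)"
  have "r - i = Suc (r - Suc i)" and "r - Suc (r - Suc i) = i" using Suc by auto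
  then have "wv \<pi> r (r - i) = wv \<pi> r (r - Suc i) * ?p / (?p - 1) + 1" by simp
  with Suc num_tokens_ge_le_ratio[OF seeds periods \<open>i \<ge> 1\<close>, of n]
  have "wv \<pi> r (r - Suc i) * (?p / (?p - 1)) \<le> real (num_tokens_ge \<pi> \<sigma> (Suc i) n) * (?p / (?p - 1))"
    by simp
  moreover have "?p / (?p - 1) > 0" using periods[OF \<open>i \<ge> 1\<close>] by simp
  ultimately show ?case by (simp only: mult_le_cancel_right_pos)
qed

lemma type_occurs_if_wbar_le:
  assumes seeds: "\<And>i. \<sigma> i \<in> seed_range \<pi> i" and periods: "\<And>r. r \<ge> 1 \<Longrightarrow> \<pi> r \<ge> 2"
    and "r \<ge> 1" and "wbar \<pi> r \<le> real n"
  shows "\<exists>t\<in>{1..n}. mp_seq \<pi> \<sigma> t = enat r"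
proof (rule token_occurs_if_num_tokens_ge_less)
  have periods': "\<And>r. r \<ge> 1 \<Longrightarrow> \<pi> r \<ge> 1"
    using periods by (meson le_trans one_le_numeral)
  have "\<pi> r \<le> num_tokens_ge \<pi> \<sigma> r n"
    using wv_le_num_tokens_ge[OF seeds periods assms(4,3) order.refl] by simp
  moreover have "clocks \<pi> \<sigma> n r \<ge> 1" "\<sigma> r \<le> \<pi> r"
    using clocks_in_seed_range[OF seeds periods', of n r] seeds[of r] \<open>r \<ge> 1\<close> by auto
  ultimately show "num_tokens_ge \<pi> \<sigma> (Suc r) n < num_tokens_ge \<pi> \<sigma> r n"
    using clock_balance[OF seeds periods' \<open>r \<ge> 1\<close>, of n] num_tokens_ge_Suc_le[of \<pi> \<sigma> r n]
    by (cases "num_tokens_ge \<pi> \<sigma> (Suc r) n = num_tokens_ge \<pi> \<sigma> r n") auto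
qed

section \<open>The seed measure and stationarity\<close>

lemma seed_measure_eq_PiM_uniform:
  "seed_measure \<pi> = (\<Pi>\<^sub>M r\<in>UNIV. measure_pmf (pmf_of_set (seed_range \<pi> r)))"
  unfolding seed_measure_def seed_range_def by (intro PiM_cong) (auto simp: pmf_of_set_singleton)

lemma prob_space_seed_measure: "prob_space (seed_measure \<pi>)"
  unfolding seed_measure_def by (intro prob_space_PiM prob_space_measure_pmf)

lemma space_seed_measure [simp]: "space (seed_measure \<pi>) = UNIV"
  by (simp add: seed_measure_def space_PiM)

lemma sets_seed_cylinder: "finite J \<Longrightarrow> {\<sigma>. Q (restrict \<sigma> J)} \<in> sets (seed_measure \<pi>)"
  unfolding seed_measure_def by (rule sets_restrict_cylinder)

lemma AE_seed_in_seed_range: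
  assumes "\<And>r. r \<ge> 1 \<Longrightarrow> \<pi> r \<ge> 1"
  shows "AE \<sigma> in seed_measure \<pi>. \<forall>i. \<sigma> i \<in> seed_range \<pi> i"
proof -
  have "set_pmf (pmf_of_set (seed_range \<pi> i)) = seed_range \<pi> i" for i
    using assms[of i] by (intro set_pmf_of_set) (auto simp: seed_range_def)
  then show ?thesis
    using AE_PiM_in_set_pmf[of "\<lambda>r. pmf_of_set (seed_range \<pi> r)"]
    unfolding seed_measure_eq_PiM_uniform by simp
qed

lemma measure_seed_cylinder:
  assumes "finite J" and "\<And>r. r \<ge> 1 \<Longrightarrow> \<pi> r \<ge> 1"
  shows "measure (seed_measure \<pi>) {\<sigma>. Q (restrict \<sigma> J)}
    = card {x \<in> Pi\<^sub>E J (seed_range \<pi>). Q x} / card (Pi\<^sub>E J (seed_range \<pi>))"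
  unfolding seed_measure_eq_PiM_uniform using assms
  by (intro measure_restrict_cylinder_uniform) (auto simp: seed_range_def)

definition clock_step_upto :: "(nat \<Rightarrow> nat) \<Rightarrow> nat \<Rightarrow> (nat \<Rightarrow> nat) \<Rightarrow> (nat \<Rightarrow> nat)" where
  "clock_step_upto \<pi> R \<phi> = restrict (clock_step \<pi> \<phi>) {..R}"

lemma restrict_clocks:
  "restrict (clocks \<pi> \<sigma> n) {..R} = (clock_step_upto \<pi> R ^^ n) (restrict \<sigma> {..R})"
proof (induction n)
  case (Suc n)
  have "restrict (clocks \<pi> \<sigma> (Suc n)) {..R} = clock_step_upto \<pi> R (restrict (clocks \<pi> \<sigma> n) {..R})"
    unfolding clock_step_upto_def clocks.simps by (intro restrict_ext clock_step_cong) auto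
  also have "\<dots> = (clock_step_upto \<pi> R ^^ Suc n) (restrict \<sigma> {..R})"
    by (simp only: Suc.IH funpow.simps comp_apply)
  finally show ?case .
qed simp

text \<open>The emitted type can be read off the new state as the first clock standing at its period;
  this makes the clock step injective.\<close>

lemma first_one_eq_enat_iff_clock_step:
  assumes range: "\<And>j. j \<in> {1..i} \<Longrightarrow> \<phi> j \<in> {1..\<pi> j}"
  shows "first_one \<phi> = enat i \<longleftrightarrow>
    i \<ge> 1 \<and> clock_step \<pi> \<phi> i = \<pi> i \<and> (\<forall>j\<in>{1..<i}. clock_step \<pi> \<phi> j \<noteq> \<pi> j)"
proof
  assume first: "first_one \<phi> = enat i"
  have "clock_step \<pi> \<phi> j \<noteq> \<pi> j" if "j \<in> {1..<i}" for j
  proof -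
    have "clock_step \<pi> \<phi> j < \<pi> j"
      using first that range[of j] by (intro clock_step_less_period) auto
    then show ?thesis by simp
  qed
  moreover have "i \<ge> 1" using first by (simp add: first_one_eq_enat_iff)
  moreover have "clock_step \<pi> \<phi> i = \<pi> i" using first by (simp add: clock_step_def)
  ultimately show "i \<ge> 1 \<and> clock_step \<pi> \<phi> i = \<pi> i \<and> (\<forall>j\<in>{1..<i}. clock_step \<pi> \<phi> j \<noteq> \<pi> j)"
    by blast
next
  assume step: "i \<ge> 1 \<and> clock_step \<pi> \<phi> i = \<pi> i \<and> (\<forall>j\<in>{1..<i}. clock_step \<pi> \<phi> j \<noteq> \<pi> j)"
  show "first_one \<phi> = enat i"
  proof (rule ccontr)
    assume "first_one \<phi> \<noteq> enat i"
    then consider "first_one \<phi> < enat i" | "enat i < first_one \<phi>"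
      using neq_iff by blast
    then show False
    proof cases
      case 1
      then obtain k where "first_one \<phi> = enat k" "k < i"
        by (cases "first_one \<phi>") auto
      then have "k \<in> {1..<i}" by (simp add: first_one_eq_enat_iff)
      moreover have "clock_step \<pi> \<phi> k = \<pi> k"
        using \<open>first_one \<phi> = enat k\<close> by (simp add: clock_step_def)
      ultimately show False using step by blast
    next
      case 2
      then have "clock_step \<pi> \<phi> i < \<pi> i"
        using step range[of i] by (intro clock_step_less_period) auto
      then show False using step by simp
    qed
  qed
qed

lemma clock_eq_if_clock_step_eq:
  assumes "i \<ge> 1" and "\<phi> i \<ge> 1" and "\<psi> i \<ge> 1"
    and "first_one \<phi> = enat i \<longleftrightarrow> first_one \<psi> = enat i"
    and "enat i < first_one \<phi> \<longleftrightarrow> enat i < first_one \<psi>"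
    and "clock_step \<pi> \<phi> i = clock_step \<pi> \<psi> i"
  shows "\<phi> i = \<psi> i"
proof -
  consider "enat i < first_one \<phi>" | "first_one \<phi> = enat i"
    | "\<not> enat i < first_one \<phi>" "first_one \<phi> \<noteq> enat i"
    by blast
  then show ?thesis
  proof cases
    case 1
    with assms(5) have "enat i < first_one \<psi>" by simp
    with 1 \<open>i \<ge> 1\<close> have "\<phi> i \<noteq> 1" "\<psi> i \<noteq> 1" by (simp_all add: enat_less_first_one_iff)
    moreover have "\<phi> i - 1 = \<psi> i - 1"
      using assms(1,2,3,6) 1 \<open>enat i < first_one \<psi>\<close> by (simp add: clock_step_apply)
    ultimately show ?thesis using assms(2,3) by linarith
  next
    case 2
    with assms(4) have "first_one \<psi> = enat i" by simp
    with 2 show ?thesis by (simp add: first_one_eq_enat_iff)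
  next
    case 3
    with assms(4,5) have "\<not> enat i < first_one \<psi>" "first_one \<psi> \<noteq> enat i" by simp_all
    with 3 assms(1,2,3,6) show ?thesis by (simp add: clock_step_apply)
  qed
qed

lemma inj_on_clock_step_upto:
  assumes periods: "\<And>r. r \<ge> 1 \<Longrightarrow> \<pi> r \<ge> 1"
  shows "inj_on (clock_step_upto \<pi> R) (Pi\<^sub>E {..R} (seed_range \<pi>))"
proof (rule inj_onI)
  fix x y
  assume x: "x \<in> Pi\<^sub>E {..R} (seed_range \<pi>)" and y: "y \<in> Pi\<^sub>E {..R} (seed_range \<pi>)"
    and eq: "clock_step_upto \<pi> R x = clock_step_upto \<pi> R y"
  have step_eq: "clock_step \<pi> x i = clock_step \<pi> y i" if "i \<le> R" for i
    using fun_cong[OF eq, of i] that by (simp add: clock_step_upto_def)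
  have range: "x j \<in> {1..\<pi> j}" "y j \<in> {1..\<pi> j}" if "j \<in> {1..R}" for j
    using that PiE_mem[OF x, of j] PiE_mem[OF y, of j] by auto
  have first_eq: "first_one x = enat i \<longleftrightarrow> first_one y = enat i" if "i \<le> R" for i
    using that first_one_eq_enat_iff_clock_step[of i x \<pi>] first_one_eq_enat_iff_clock_step[of i y \<pi>]
      range step_eq by simp
  have less_eq: "enat i < first_one x \<longleftrightarrow> enat i < first_one y" if "i \<le> R" for i
    using that first_eq by (simp add: enat_less_iff_forall_neq)
  show "x = y"
  proof (rule PiE_ext[OF x y])
    fix i assume "i \<in> {..R}"
    show "x i = y i"
    proof (cases "i = 0")
      case True
      then show ?thesis using PiE_mem[OF x, of 0] PiE_mem[OF y, of 0] by (simp add: seed_range_def)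
    next
      case False
      with \<open>i \<in> {..R}\<close> have i: "i \<ge> 1" "i \<le> R" by auto
      show ?thesis
        by (rule clock_eq_if_clock_step_eq[OF i(1) _ _ first_eq[OF i(2)] less_eq[OF i(2)]
              step_eq[OF i(2)]])
           (use range[of i] i in auto)
    qed
  qed
qed

lemma bij_betw_clock_step_upto:
  assumes periods: "\<And>r. r \<ge> 1 \<Longrightarrow> \<pi> r \<ge> 1"
  shows "bij_betw (clock_step_upto \<pi> R) (Pi\<^sub>E {..R} (seed_range \<pi>)) (Pi\<^sub>E {..R} (seed_range \<pi>))"
proof -
  have "clock_step_upto \<pi> R ` Pi\<^sub>E {..R} (seed_range \<pi>) \<subseteq> Pi\<^sub>E {..R} (seed_range \<pi>)"
    using periods by (auto simp: clock_step_upto_def intro!: clock_step_in_seed_range)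
  moreover have "finite (Pi\<^sub>E {..R} (seed_range \<pi>))"
    by (intro finite_PiE) (auto simp: seed_range_def)
  ultimately show ?thesis
    using inj_on_clock_step_upto[OF periods] by (simp add: bij_betw_def endo_inj_surj)
qed

lemma card_Collect_bij_betw:
  assumes "bij_betw g A A"
  shows "card {x \<in> A. Q (g x)} = card {x \<in> A. Q x}"
proof -
  have "bij_betw g {x \<in> A. Q (g x)} {x \<in> A. Q x}"
    using assms by (rule bij_betw_subset) (use assms in \<open>auto simp: bij_betw_def\<close>)
  then show ?thesis by (rule bij_betw_same_card)
qed

lemma measure_clocks_cylinder:
  assumes periods: "\<And>r. r \<ge> 1 \<Longrightarrow> \<pi> r \<ge> 1"
  shows "measure (seed_measure \<pi>) {\<sigma>. Q (restrict (clocks \<pi> \<sigma> n) {..R})}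
    = measure (seed_measure \<pi>) {\<sigma>. Q (restrict \<sigma> {..R})}"
proof -
  let ?X = "Pi\<^sub>E {..R} (seed_range \<pi>)" and ?f = "clock_step_upto \<pi> R ^^ n"
  have "bij_betw ?f ?X ?X"
    using periods by (intro bij_betw_funpow bij_betw_clock_step_upto)
  have "measure (seed_measure \<pi>) {\<sigma>. Q (restrict (clocks \<pi> \<sigma> n) {..R})}
      = measure (seed_measure \<pi>) {\<sigma>. Q (?f (restrict \<sigma> {..R}))}"
    by (simp add: restrict_clocks)
  also have "\<dots> = card {x \<in> ?X. Q (?f x)} / card ?X"
    using periods by (intro measure_seed_cylinder) auto
  also have "\<dots> = card {x \<in> ?X. Q x} / card ?X"
    using card_Collect_bij_betw[OF \<open>bij_betw ?f ?X ?X\<close>] by simp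
  also have "\<dots> = measure (seed_measure \<pi>) {\<sigma>. Q (restrict \<sigma> {..R})}"
    using periods by (intro measure_seed_cylinder[symmetric]) auto
  finally show ?thesis .
qed

lemma mp_seq_eq_enat_iff_restrict:
  "r \<le> R \<Longrightarrow> mp_seq \<pi> \<sigma> t = enat r \<longleftrightarrow> first_one (restrict (clocks \<pi> \<sigma> (t - 1)) {..R}) = enat r"
  by (simp add: mp_seq_def first_one_eq_enat_iff)

lemma sets_mp_seq_eq_enat: "{\<sigma>. mp_seq \<pi> \<sigma> t = enat r} \<in> sets (seed_measure \<pi>)"
  using sets_seed_cylinder[of "{..r}" "\<lambda>x. first_one ((clock_step_upto \<pi> r ^^ (t - 1)) x) = enat r"]
  by (simp add: mp_seq_eq_enat_iff_restrict[OF order.refl] restrict_clocks)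

lemma measurable_mp_seq: "(\<lambda>\<sigma>. mp_seq \<pi> \<sigma> t) \<in> seed_measure \<pi> \<rightarrow>\<^sub>M count_space UNIV"
  unfolding measurable_count_space_eq2_countable
proof (intro conjI ballI)
  fix k :: enat
  show "(\<lambda>\<sigma>. mp_seq \<pi> \<sigma> t) -` {k} \<inter> space (seed_measure \<pi>) \<in> sets (seed_measure \<pi>)"
  proof (cases k)
    case (enat r)
    then show ?thesis using sets_mp_seq_eq_enat[of \<pi> t r] by (simp add: vimage_def)
  next
    case infinity
    then have "(\<lambda>\<sigma>. mp_seq \<pi> \<sigma> t) -` {k} \<inter> space (seed_measure \<pi>)
        = UNIV - (\<Union>r. {\<sigma>. mp_seq \<pi> \<sigma> t = enat r})"
      by auto
    moreover have "(\<Union>r. {\<sigma>. mp_seq \<pi> \<sigma> t = enat r}) \<in> sets (seed_measure \<pi>)"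
      using sets_mp_seq_eq_enat by (intro sets.countable_UN) auto
    ultimately show ?thesis by (metis sets.compl_sets space_seed_measure)
  qed
qed auto

lemma sets_mp_seq_notin: "{\<sigma>. mp_seq \<pi> \<sigma> t \<notin> X} \<in> sets (seed_measure \<pi>)"
  using measurable_sets[OF measurable_mp_seq, of "- X" \<pi> t] by (simp add: vimage_def)

lemma measure_mp_seq_notin_stationary:
  assumes "finite B" and periods: "\<And>r. r \<ge> 1 \<Longrightarrow> \<pi> r \<ge> 1"
  shows "measure (seed_measure \<pi>) {\<sigma>. mp_seq \<pi> \<sigma> t \<notin> enat ` B}
    = measure (seed_measure \<pi>) {\<sigma>. mp_seq \<pi> \<sigma> 1 \<notin> enat ` B}"
proof -
  obtain R where R: "\<forall>r\<in>B. r \<le> R"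
    using \<open>finite B\<close> finite_nat_set_iff_bounded_le by blast
  have "(\<exists>r\<in>B. mp_seq \<pi> \<sigma> s = enat r)
      \<longleftrightarrow> (\<exists>r\<in>B. first_one (restrict (clocks \<pi> \<sigma> (s - 1)) {..R}) = enat r)" for \<sigma> s
    using R mp_seq_eq_enat_iff_restrict[of _ R \<pi> \<sigma> s] by meson
  then have "{\<sigma>. mp_seq \<pi> \<sigma> s \<notin> enat ` B}
      = {\<sigma>. first_one (restrict (clocks \<pi> \<sigma> (s - 1)) {..R}) \<notin> enat ` B}" for s
    by (auto simp: image_iff)
  then show ?thesis
    using measure_clocks_cylinder[OF periods, where Q = "\<lambda>x. first_one x \<notin> enat ` B"] by simp
qed

section \<open>Expected number of types seen\<close>

definition types_seen :: "(nat \<Rightarrow> nat) \<Rightarrow> nat \<Rightarrow> (nat \<Rightarrow> nat) \<Rightarrow> nat set" where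
  "types_seen \<pi> T \<sigma> = {r. r \<ge> 1 \<and> (\<exists>t\<in>{1..T}. mp_seq \<pi> \<sigma> t = enat r)}"

lemma obtain_time_of_type_seen:
  assumes "r \<in> types_seen \<pi> T \<sigma>"
  obtains t where "t \<in> {1..T}" and "mp_seq \<pi> \<sigma> t = enat r"
  using assms by (auto simp: types_seen_def)

lemma types_seen_subset_image: "types_seen \<pi> T \<sigma> \<subseteq> (\<lambda>t. the_enat (mp_seq \<pi> \<sigma> t)) ` {1..T}"
proof
  fix r assume "r \<in> types_seen \<pi> T \<sigma>"
  then obtain t where "t \<in> {1..T}" "mp_seq \<pi> \<sigma> t = enat r"
    by (rule obtain_time_of_type_seen)
  then show "r \<in> (\<lambda>t. the_enat (mp_seq \<pi> \<sigma> t)) ` {1..T}"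
    by (intro rev_image_eqI[of t]) simp_all
qed

lemma finite_types_seen: "finite (types_seen \<pi> T \<sigma>)"
  using types_seen_subset_image by (rule finite_subset) simp

lemma card_types_seen_le: "card (types_seen \<pi> T \<sigma>) \<le> T"
proof -
  have "card (types_seen \<pi> T \<sigma>) \<le> card ((\<lambda>t. the_enat (mp_seq \<pi> \<sigma> t)) ` {1..T})"
    by (rule card_mono[OF _ types_seen_subset_image]) simp
  also have "\<dots> \<le> card {1..T}" by (rule card_image_le) simp
  finally show ?thesis by simp
qed

lemma card_types_seen_le_card_add:
  assumes "finite B"
  shows "card (types_seen \<pi> T \<sigma>) \<le> card B + card {t \<in> {1..T}. mp_seq \<pi> \<sigma> t \<notin> enat ` B}"
proof -
  let ?late = "{t \<in> {1..T}. mp_seq \<pi> \<sigma> t \<notin> enat ` B}"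
  have "types_seen \<pi> T \<sigma> \<subseteq> B \<union> (\<lambda>t. the_enat (mp_seq \<pi> \<sigma> t)) ` ?late"
  proof
    fix r assume "r \<in> types_seen \<pi> T \<sigma>"
    then obtain t where t: "t \<in> {1..T}" "mp_seq \<pi> \<sigma> t = enat r"
      by (rule obtain_time_of_type_seen)
    show "r \<in> B \<union> (\<lambda>t. the_enat (mp_seq \<pi> \<sigma> t)) ` ?late"
    proof (cases "r \<in> B")
      case False
      with t have "t \<in> ?late" by auto
      with t show ?thesis by (intro UnI2 rev_image_eqI[of t]) simp_all
    qed simp
  qed
  then have "card (types_seen \<pi> T \<sigma>) \<le> card (B \<union> (\<lambda>t. the_enat (mp_seq \<pi> \<sigma> t)) ` ?late)"
    using assms by (intro card_mono) auto
  also have "\<dots> \<le> card B + card ((\<lambda>t. the_enat (mp_seq \<pi> \<sigma> t)) ` ?late)"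
    by (rule card_Un_le)
  also have "\<dots> \<le> card B + card ?late"
    by (simp add: card_image_le)
  finally show ?thesis .
qed

lemma measurable_card_types_seen:
  "(\<lambda>\<sigma>. real (card (types_seen \<pi> T \<sigma>))) \<in> borel_measurable (seed_measure \<pi>)"
proof -
  have "(\<lambda>\<sigma>. \<lambda>t\<in>{1..T}. mp_seq \<pi> \<sigma> t) \<in> seed_measure \<pi> \<rightarrow>\<^sub>M (\<Pi>\<^sub>M t\<in>{1..T}. count_space UNIV)"
    by (intro measurable_restrict measurable_mp_seq)
  also have "(\<Pi>\<^sub>M t\<in>{1..T}. count_space UNIV) = count_space (\<Pi>\<^sub>E t\<in>{1..T}. (UNIV :: enat set))"
    by (intro count_space_PiM_finite) simp_all
  finally have "(\<lambda>\<sigma>. g (\<lambda>t\<in>{1..T}. mp_seq \<pi> \<sigma> t)) \<in> borel_measurable (seed_measure \<pi>)"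
    for g :: "(nat \<Rightarrow> enat) \<Rightarrow> real"
    by (rule measurable_compose) simp
  note this[of "\<lambda>x. real (card {r. r \<ge> 1 \<and> (\<exists>t\<in>{1..T}. x t = enat r)})"]
  moreover have "{r. r \<ge> 1 \<and> (\<exists>t\<in>{1..T}. (\<lambda>t\<in>{1..T}. mp_seq \<pi> \<sigma> t) t = enat r)} = types_seen \<pi> T \<sigma>"
    for \<sigma>
    unfolding types_seen_def by (intro Collect_cong conj_cong refl bex_cong) simp_all
  ultimately show ?thesis by (simp only:)
qed

lemma integrable_card_types_seen:
  "integrable (seed_measure \<pi>) (\<lambda>\<sigma>. real (card (types_seen \<pi> T \<sigma>)))"
proof -
  interpret prob_space "seed_measure \<pi>" by (rule prob_space_seed_measure)
  show ?thesis
    using measurable_card_types_seen card_types_seen_le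
    by (intro integrable_const_bound[where B = T]) auto
qed

lemma card_times_notin_eq_sum_indicator:
  "real (card {t \<in> {1..T}. mp_seq \<pi> \<sigma> t \<notin> X})
    = (\<Sum>t\<in>{1..T}. indicator {\<sigma>. mp_seq \<pi> \<sigma> t \<notin> X} \<sigma>)"
  by (simp add: indicator_def sum.If_cases Int_def)

lemma integrable_card_times_notin:
  "integrable (seed_measure \<pi>) (\<lambda>\<sigma>. real (card {t \<in> {1..T}. mp_seq \<pi> \<sigma> t \<notin> X}))"
proof -
  interpret prob_space "seed_measure \<pi>" by (rule prob_space_seed_measure)
  show ?thesis
    unfolding card_times_notin_eq_sum_indicator using sets_mp_seq_notin
    by (intro Bochner_Integration.integrable_sum integrable_real_indicator)
       (auto simp: emeasure_eq_measure)
qed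

lemma expected_card_times_notin:
  assumes "finite B" and periods: "\<And>r. r \<ge> 1 \<Longrightarrow> \<pi> r \<ge> 1"
  shows "(\<integral>\<sigma>. real (card {t \<in> {1..T}. mp_seq \<pi> \<sigma> t \<notin> enat ` B}) \<partial>seed_measure \<pi>)
    = real T * measure (seed_measure \<pi>) {\<sigma>. mp_seq \<pi> \<sigma> 1 \<notin> enat ` B}"
proof -
  interpret prob_space "seed_measure \<pi>" by (rule prob_space_seed_measure)
  have "(\<integral>\<sigma>. real (card {t \<in> {1..T}. mp_seq \<pi> \<sigma> t \<notin> enat ` B}) \<partial>seed_measure \<pi>)
      = (\<Sum>t\<in>{1..T}. \<integral>\<sigma>. indicator {\<sigma>. mp_seq \<pi> \<sigma> t \<notin> enat ` B} \<sigma> \<partial>seed_measure \<pi>)"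
    unfolding card_times_notin_eq_sum_indicator using sets_mp_seq_notin
    by (intro Bochner_Integration.integral_sum integrable_real_indicator)
       (auto simp: emeasure_eq_measure)
  also have "\<dots> = (\<Sum>t\<in>{1..T}. prob {\<sigma>. mp_seq \<pi> \<sigma> t \<notin> enat ` B})"
    by (intro sum.cong refl)
       (simp only: Bochner_Integration.integral_indicator space_seed_measure Int_UNIV_right)
  also have "\<dots> = (\<Sum>t\<in>{1..T}. prob {\<sigma>. mp_seq \<pi> \<sigma> 1 \<notin> enat ` B})"
    using \<open>finite B\<close> periods by (intro sum.cong refl measure_mp_seq_notin_stationary)
  finally show ?thesis by simp
qed

lemma (in prob_space) finite_prob_ge:
  assumes "disjoint_family E" and "\<And>r. E r \<in> events" and "\<epsilon> > 0"
  shows "finite {r. prob (E r) \<ge> \<epsilon>}"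
proof (rule ccontr)
  assume "infinite {r. prob (E r) \<ge> \<epsilon>}"
  then obtain F where F: "finite F" "card F = nat \<lceil>1 / \<epsilon>\<rceil> + 1" "F \<subseteq> {r. prob (E r) \<ge> \<epsilon>}"
    using infinite_arbitrarily_large by blast
  have "card F * \<epsilon> = (\<Sum>r\<in>F. \<epsilon>)" by simp
  also have "\<dots> \<le> (\<Sum>r\<in>F. prob (E r))"
    using F(3) by (intro sum_mono) auto
  also have "\<dots> = prob (\<Union>r\<in>F. E r)"
    using assms F(1)
    by (intro finite_measure_finite_Union[symmetric])
       (auto simp: disjoint_family_on_def disjoint_family_subset)
  also have "\<dots> \<le> 1" by (rule prob_le_1)
  finally have "card F * \<epsilon> \<le> 1" .
  moreover have "1 / \<epsilon> < card F"
    using F(2) real_nat_ceiling_ge[of "1 / \<epsilon>"] by simp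
  then have "1 < card F * \<epsilon>"
    using \<open>\<epsilon> > 0\<close> by (simp add: field_simps)
  ultimately show False by simp
qed

lemma card_le_expected_card_types_seen:
  assumes periods: "\<And>r. r \<ge> 1 \<Longrightarrow> \<pi> r \<ge> 2"
  shows "real (card {r. r \<ge> 1 \<and> wbar \<pi> r \<le> real T})
    \<le> (\<integral>\<sigma>. real (card (types_seen \<pi> T \<sigma>)) \<partial>seed_measure \<pi>)"
proof -
  interpret prob_space "seed_measure \<pi>" by (rule prob_space_seed_measure)
  have "\<And>r. r \<ge> 1 \<Longrightarrow> \<pi> r \<ge> 1"
    using periods by (meson le_trans one_le_numeral)
  then have seeds: "AE \<sigma> in seed_measure \<pi>. \<forall>i. \<sigma> i \<in> seed_range \<pi> i"
    by (rule AE_seed_in_seed_range)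
  have "AE \<sigma> in seed_measure \<pi>.
      real (card {r. r \<ge> 1 \<and> wbar \<pi> r \<le> real T}) \<le> real (card (types_seen \<pi> T \<sigma>))"
    using seeds
  proof eventually_elim
    case (elim \<sigma>)
    have "\<exists>t\<in>{1..T}. mp_seq \<pi> \<sigma> t = enat r" if "r \<ge> 1" "wbar \<pi> r \<le> real T" for r
      by (rule type_occurs_if_wbar_le) (use elim periods that in auto)
    then have "{r. r \<ge> 1 \<and> wbar \<pi> r \<le> real T} \<subseteq> types_seen \<pi> T \<sigma>"
      by (auto simp: types_seen_def)
    then show ?case using finite_types_seen by (simp add: card_mono)
  qed
  then have "(\<integral>\<sigma>. real (card {r. r \<ge> 1 \<and> wbar \<pi> r \<le> real T}) \<partial>seed_measure \<pi>)
      \<le> (\<integral>\<sigma>. real (card (types_seen \<pi> T \<sigma>)) \<partial>seed_measure \<pi>)"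
    by (intro integral_mono_AE integrable_card_types_seen) simp
  then show ?thesis using prob_space by simp
qed

lemma expected_card_types_seen_le:
  assumes periods: "\<And>r. r \<ge> 1 \<Longrightarrow> \<pi> r \<ge> 1" and "finite B"
  shows "(\<integral>\<sigma>. real (card (types_seen \<pi> T \<sigma>)) \<partial>seed_measure \<pi>)
    \<le> real (card B) + real T * measure (seed_measure \<pi>) {\<sigma>. mp_seq \<pi> \<sigma> 1 \<notin> enat ` B}"
proof -
  interpret prob_space "seed_measure \<pi>" by (rule prob_space_seed_measure)
  let ?late = "\<lambda>\<sigma>. real (card {t \<in> {1..T}. mp_seq \<pi> \<sigma> t \<notin> enat ` B})"
  have "real (card (types_seen \<pi> T \<sigma>)) \<le> real (card B) + ?late \<sigma>" for \<sigma>
    using card_types_seen_le_card_add[OF \<open>finite B\<close>, of \<pi> T \<sigma>] by linarith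
  then have "(\<integral>\<sigma>. real (card (types_seen \<pi> T \<sigma>)) \<partial>seed_measure \<pi>)
      \<le> (\<integral>\<sigma>. real (card B) + ?late \<sigma> \<partial>seed_measure \<pi>)"
    by (intro integral_mono integrable_card_types_seen Bochner_Integration.integrable_add
        integrable_const integrable_card_times_notin)
  also have "\<dots> = (\<integral>\<sigma>. real (card B) \<partial>seed_measure \<pi>) + (\<integral>\<sigma>. ?late \<sigma> \<partial>seed_measure \<pi>)"
    by (rule Bochner_Integration.integral_add[OF integrable_const integrable_card_times_notin])
  also have "(\<integral>\<sigma>. real (card B) \<partial>seed_measure \<pi>) = real (card B)"
    using prob_space by (simp only: lebesgue_integral_const space_seed_measure scaleR_one)
  also have "(\<integral>\<sigma>. ?late \<sigma> \<partial>seed_measure \<pi>) = real T * prob {\<sigma>. mp_seq \<pi> \<sigma> 1 \<notin> enat ` B}"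
    using \<open>finite B\<close> periods by (rule expected_card_times_notin)
  finally show ?thesis .
qed

theorem theorem6:
  fixes \<pi> :: "nat \<Rightarrow> nat" and T :: nat
  assumes periods: "\<And>r. r \<ge> 1 \<Longrightarrow> \<pi> r \<ge> 2"
    and T: "T \<ge> 1"
  defines "A \<equiv> {r::nat. r \<ge> 1 \<and> wbar \<pi> r \<le> real T}"
    and "B \<equiv> {r::nat. r \<ge> 1 \<and> measure (seed_measure \<pi>) {\<sigma> \<in> space (seed_measure \<pi>). mp_seq \<pi> \<sigma> 1 = enat r} \<ge> 1 / real T}"
    and "N \<equiv> (\<lambda>\<sigma>. {r::nat. r \<ge> 1 \<and> (\<exists>t\<in>{1..T}. mp_seq \<pi> \<sigma> t = enat r)})"
  shows "real (card A) \<le> (\<integral>\<sigma>. real (card (N \<sigma>)) \<partial>seed_measure \<pi>)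
       \<and> (\<integral>\<sigma>. real (card (N \<sigma>)) \<partial>seed_measure \<pi>)
           \<le> real (card B) + real T * measure (seed_measure \<pi>) {\<sigma> \<in> space (seed_measure \<pi>). \<not> (\<exists>r\<in>B. mp_seq \<pi> \<sigma> 1 = enat r)}"
proof -
  interpret prob_space "seed_measure \<pi>" by (rule prob_space_seed_measure)
  have periods': "\<And>r. r \<ge> 1 \<Longrightarrow> \<pi> r \<ge> 1"
    using periods by (meson le_trans one_le_numeral)
  have N: "N = types_seen \<pi> T"
    unfolding N_def types_seen_def ..
  have "finite {r. prob {\<sigma>. mp_seq \<pi> \<sigma> 1 = enat r} \<ge> 1 / real T}"
    using T by (intro finite_prob_ge) (auto simp: disjoint_family_on_def sets_mp_seq_eq_enat)
  then have "finite B"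
    unfolding B_def by (rule finite_subset[rotated]) auto
  have "{\<sigma> \<in> space (seed_measure \<pi>). \<not> (\<exists>r\<in>B. mp_seq \<pi> \<sigma> 1 = enat r)}
      = {\<sigma>. mp_seq \<pi> \<sigma> 1 \<notin> enat ` B}"
    by auto
  moreover have "real (card A) \<le> (\<integral>\<sigma>. real (card (N \<sigma>)) \<partial>seed_measure \<pi>)"
    unfolding A_def N using periods by (rule card_le_expected_card_types_seen)
  moreover have "(\<integral>\<sigma>. real (card (N \<sigma>)) \<partial>seed_measure \<pi>)
      \<le> real (card B) + real T * prob {\<sigma>. mp_seq \<pi> \<sigma> 1 \<notin> enat ` B}"
    unfolding N using periods' \<open>finite B\<close> by (rule expected_card_types_seen_le)
  ultimately show ?thesis by simp
qed

end
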